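(* Let $P,Q$ be nonzero coprime integers with $\Delta:=P^2-4Q\neq0$, such that $\alpha/\beta$ is not a root of unity, where $\alpha,\beta$ are the roots of $x^2-Px+Q$. Let $(U_n)$ be the Lucas sequence $U_n=(\alpha^n-\beta^n)/(\alpha-\beta)$. Then for all positive integers $n,k$ with $n\ge k$, \[\mathrm{lcm}\left\{\binom{n}{m}_{\boldsymbol U}:\ 1\le m\le k\right\}=\frac{\mathrm{lcm}(U_{n+1},U_n,\dots,U_{n-k+1})}{|U_{n+1}|}.\]
   Context: $U_0=0$, $U_1=1$, $U_{n+2}=PU_{n+1}-QU_n$. For $n\ge k\ge1$, $\binom{n}{k}_{\boldsymbol U}:=\frac{U_nU_{n-1}\cdots U_{n-k+1}}{U_1U_2\cdots U_k}$. *)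

theory Defs
  imports Complex_Main
begin

fun lucasU :: "int \<Rightarrow> int \<Rightarrow> nat \<Rightarrow> int" where
  "lucasU P Q 0 = 0"
| "lucasU P Q (Suc 0) = 1"
| "lucasU P Q (Suc (Suc n)) = P * lucasU P Q (Suc n) - Q * lucasU P Q n"

text \<open>Lucasnomial (n choose k)_U = U_n U_{n-1} ... U_{n-k+1} / (U_1 ... U_k).
  The quotient is an integer for the sequences considered; it is computed with
  integer division.\<close>
definition lucasnomial :: "int \<Rightarrow> int \<Rightarrow> nat \<Rightarrow> nat \<Rightarrow> int" where
  "lucasnomial P Q n k =
     (\<Prod>i\<in>{n-k+1..n}. lucasU P Q i) div (\<Prod>i\<in>{1..k}. lucasU P Q i)"

end

theory Submission
  imports Defs "HOL-Computational_Algebra.Primes"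
begin

(* For a prime p, the valuation g i = v_p(U_i) satisfies g (gcd a b) = min (g a) (g b) because U is a
   strong divisibility sequence. So each level set {i > 0. t <= g i} is the set of positive multiples
   of some d_t, and counting multiples shows, as in Kummer's theorem, that v_p of the U-nomial
   (n choose m)_U is the number of levels t at which m + (n - m) carries modulo d_t, i.e.
   n mod d_t < m mod d_t. These carry levels all lie in (g (n+1), g i] for one i in (n - m, n],
   and every level in (g (n+1), g i] with 0 < i <= n is a carry for m = n + 1 - i. Hence
   |U_(n+1)| (n choose m)_U divides lcm(U_(n-m+1), ..., U_(n+1)), and each U_i with i <= n divides
   U_(n+1) (n choose n+1-i)_U; comparing the two lcms gives the identity. *)

lemma div_add_eq_carry:
  fixes a b d :: nat
  shows "(a + b) div d = a div d + b div d + of_bool ((a + b) mod d < b mod d)"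
proof (cases "d = 0")
  case False
  have "a mod d < d" and "b mod d < d"
    using False by simp_all
  have sum_mod: "(a + b) mod d = (a mod d + b mod d) mod d"
    by (rule mod_add_eq [symmetric])
  have "(a mod d + b mod d) div d = of_bool ((a + b) mod d < b mod d)"
  proof (cases "a mod d + b mod d < d")
    case True
    then show ?thesis
      using sum_mod by (simp add: div_less)
  next
    case False
    then have "a mod d + b mod d - d < d"
      using \<open>a mod d < d\<close> \<open>b mod d < d\<close> by linarith
    then have "(a mod d + b mod d) div d = 1" and "(a + b) mod d = a mod d + b mod d - d"
      using False sum_mod \<open>d \<noteq> 0\<close> by (simp_all add: le_div_geq le_mod_geq)
    moreover have "a mod d + b mod d - d < b mod d"
      using \<open>a mod d < d\<close> False by linarith
    ultimately show ?thesis
      by simp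
  qed
  then show ?thesis
    using div_add1_eq [of a b d] by simp
qed simp

lemma card_dvd_greaterThanAtMost:
  fixes a b d :: nat
  shows "card {i \<in> {a<..b}. d dvd i} = b div d - a div d"
proof (cases "d = 0")
  case False
  have "{i \<in> {a<..b}. d dvd i} = (\<lambda>j. j * d) ` {a div d<..b div d}"
    using False
    by (auto simp: div_less_iff_less_mult less_eq_div_iff_mult_less_eq mult.commute elim!: dvdE)
  moreover have "inj_on (\<lambda>j. j * d) {a div d<..b div d}"
    using False by (simp add: inj_on_def)
  ultimately show ?thesis
    by (simp add: card_image)
qed simp

lemma sum_eq_sum_card_level_sets:
  fixes g :: "'a \<Rightarrow> nat"
  assumes "finite I" and "\<forall>i\<in>I. g i \<le> G"
  shows "(\<Sum>i\<in>I. g i) = (\<Sum>t=1..G. card {i \<in> I. t \<le> g i})"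
proof -
  have "g i = (\<Sum>t=1..G. of_bool (t \<le> g i))" if "i \<in> I" for i
  proof -
    have "{1..G} \<inter> {t. t \<le> g i} = {1..g i}"
      using that assms(2) by auto
    then show ?thesis
      by simp
  qed
  then have "(\<Sum>i\<in>I. g i) = (\<Sum>i\<in>I. \<Sum>t=1..G. of_bool (t \<le> g i))"
    by (rule sum.cong [OF refl])
  also have "\<dots> = (\<Sum>t=1..G. \<Sum>i\<in>I. of_bool (t \<le> g i))"
    by (rule sum.swap)
  also have "\<dots> = (\<Sum>t=1..G. card {i \<in> I. t \<le> g i})"
    using assms(1) by (simp add: Collect_conj_eq Int_commute)
  finally show ?thesis .
qed

locale gcd_min_hom =
  fixes g :: "nat \<Rightarrow> nat"
  assumes gcd_eq_min: "0 < a \<Longrightarrow> 0 < b \<Longrightarrow> g (gcd a b) = min (g a) (g b)"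
begin

definition period :: "nat \<Rightarrow> nat" where
  "period t = (if \<exists>i>0. t \<le> g i then LEAST i. 0 < i \<and> t \<le> g i else 0)"

lemma le_iff_period_dvd:
  assumes "0 < i"
  shows "t \<le> g i \<longleftrightarrow> period t dvd i"
proof (cases "\<exists>i>0. t \<le> g i")
  case True
  then have least: "period t = (LEAST i. 0 < i \<and> t \<le> g i)"
    by (simp add: period_def)
  have period: "0 < period t \<and> t \<le> g (period t)"
    unfolding least by (rule LeastI_ex) (use True in blast)
  show ?thesis
  proof
    assume "t \<le> g i"
    then have "0 < gcd (period t) i \<and> t \<le> g (gcd (period t) i)"
      using gcd_eq_min [of "period t" i] period assms by simp
    then have "period t \<le> gcd (period t) i"
      unfolding least by (rule Least_le)
    moreover have "gcd (period t) i \<le> period t"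
      using period by (intro gcd_le1_nat) simp
    ultimately have "gcd (period t) i = period t"
      by linarith
    then show "period t dvd i"
      by (metis gcd_dvd2)
  next
    assume "period t dvd i"
    then have "g (period t) = min (g (period t)) (g i)"
      using gcd_eq_min [of "period t" i] period assms by (simp add: gcd_nat.absorb1)
    then have "g (period t) \<le> g i"
      by (metis min.cobounded2)
    then show "t \<le> g i"
      using period by linarith
  qed
next
  case False
  have "period t = 0"
    unfolding period_def using False by (rule if_not_P)
  moreover have "\<not> t \<le> g i"
    using False assms by blast
  ultimately show ?thesis
    using assms by simp
qed

lemma sum_greaterThanAtMost_eq_sum_div_period:
  assumes "\<forall>i\<in>{a<..b}. g i \<le> G"
  shows "(\<Sum>i\<in>{a<..b}. g i) = (\<Sum>t=1..G. b div period t - a div period t)"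
proof -
  have "{i \<in> {a<..b}. t \<le> g i} = {i \<in> {a<..b}. period t dvd i}" for t
    using le_iff_period_dvd by auto
  then show ?thesis
    using sum_eq_sum_card_level_sets [OF _ assms] card_dvd_greaterThanAtMost
    by simp
qed

definition carries :: "nat \<Rightarrow> nat \<Rightarrow> nat set" where
  "carries n m = {t. 0 < t \<and> n mod period t < m mod period t}"

lemma carry_le_g:
  assumes "m \<le> n" and "t \<in> carries n m"
  shows "\<exists>i\<in>{n - m<..n}. t \<le> g i"
proof -
  have carry: "n mod period t < m mod period t"
    using assms(2) by (simp add: carries_def)
  have "n mod period t < m"
    using carry mod_less_eq_dividend [of m "period t"] by linarith
  then have i: "n - n mod period t \<in> {n - m<..n}"
    using assms(1) by auto
  moreover have "period t dvd n - n mod period t"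
    by (simp add: minus_mod_eq_mult_div)
  moreover have "0 < n - n mod period t"
    using i by simp
  ultimately show ?thesis
    using le_iff_period_dvd [of "n - n mod period t" t] by blast
qed

lemma carries_subset:
  assumes "m \<le> n"
  shows "carries n m \<subseteq> {1..Max (g ` {..n})}"
proof
  fix t
  assume t: "t \<in> carries n m"
  then obtain i where i: "i \<in> {n - m<..n}" "t \<le> g i"
    using carry_le_g [OF assms] by blast
  have "g i \<le> Max (g ` {..n})"
    by (rule Max_ge) (use i in auto)
  then show "t \<in> {1..Max (g ` {..n})}"
    using i(2) t by (simp add: carries_def)
qed

lemma finite_carries:
  assumes "m \<le> n"
  shows "finite (carries n m)"
  using carries_subset [OF assms] by (rule finite_subset) simp

lemma sum_greaterThanAtMost_eq_sum_add_card_carries: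
  assumes "m \<le> n"
  shows "(\<Sum>i\<in>{n - m<..n}. g i) = (\<Sum>i\<in>{0<..m}. g i) + card (carries n m)"
proof -
  define G where "G = Max (g ` {..n})"
  have G_bound: "g i \<le> G" if "i \<le> n" for i
    using that by (auto simp: G_def intro: Max_ge)
  have carries: "carries n m = {1..G} \<inter> {t. n mod period t < m mod period t}"
    using carries_subset [OF assms] by (auto simp: carries_def G_def)
  define x where "x = n - m"
  have n: "n = x + m"
    using assms by (simp add: x_def)
  have "(\<Sum>i\<in>{n - m<..n}. g i) = (\<Sum>t=1..G. n div period t - x div period t)"
    using sum_greaterThanAtMost_eq_sum_div_period [of x n G] G_bound n by simp
  also have "\<dots> = (\<Sum>t=1..G. m div period t + of_bool (n mod period t < m mod period t))"
    unfolding n div_add_eq_carry by simp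
  also have "\<dots> = (\<Sum>i\<in>{0<..m}. g i) + card (carries n m)"
    using sum_greaterThanAtMost_eq_sum_div_period [of 0 m G] G_bound assms by (simp add: sum.distrib carries)
  finally show ?thesis .
qed

lemma g_Suc_less_carry:
  assumes "t \<in> carries n m"
  shows "g (Suc n) < t"
proof (rule ccontr)
  assume "\<not> g (Suc n) < t"
  then have "period t dvd Suc n"
    using le_iff_period_dvd [of "Suc n" t] by simp
  then have "Suc (n mod period t) = period t"
    by (metis dvd_imp_mod_0 mod_Suc nat.distinct(1))
  moreover have "m mod period t < period t"
    using \<open>period t dvd Suc n\<close> by (intro mod_less_divisor) (auto intro: gr0I)
  moreover have "n mod period t < m mod period t"
    using assms by (simp add: carries_def)
  ultimately show False
    by linarith
qed

lemma add_card_carries_le: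
  assumes "m \<le> n"
  shows "\<exists>i\<in>{n - m<..Suc n}. g (Suc n) + card (carries n m) \<le> g i"
proof (cases "carries n m = {}")
  case False
  define t where "t = Max (carries n m)"
  have "t \<in> carries n m"
    unfolding t_def using finite_carries [OF assms] False by (rule Max_in)
  then obtain i where i: "i \<in> {n - m<..n}" "t \<le> g i"
    using carry_le_g [OF assms] by blast
  have "carries n m \<subseteq> {g (Suc n)<..g i}"
  proof
    fix s
    assume "s \<in> carries n m"
    then have "s \<le> t"
      unfolding t_def using finite_carries [OF assms] by (rule Max_ge [rotated])
    then show "s \<in> {g (Suc n)<..g i}"
      using g_Suc_less_carry [OF \<open>s \<in> carries n m\<close>] i(2) by simp
  qed
  then have "card (carries n m) \<le> g i - g (Suc n)"
    using card_mono [of "{g (Suc n)<..g i}"] by simp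
  moreover have "g (Suc n) < g i"
    using g_Suc_less_carry [OF \<open>t \<in> carries n m\<close>] i(2) by simp
  ultimately show ?thesis
    using i(1) by (intro bexI [of _ i]) auto
next
  case True
  then show ?thesis
    by (intro bexI [of _ "Suc n"]) auto
qed

lemma le_add_card_carries:
  assumes "0 < i" and "i \<le> n"
  shows "g i \<le> g (Suc n) + card (carries n (Suc n - i))"
proof -
  define m where "m = Suc n - i"
  have m: "0 < m" "Suc n = i + m" "n = i + (m - 1)"
    using assms by (simp_all add: m_def)
  have "{g (Suc n)<..g i} \<subseteq> carries n m"
  proof
    fix t
    assume t: "t \<in> {g (Suc n)<..g i}"
    then have "period t dvd i" and "\<not> period t dvd Suc n"
      using le_iff_period_dvd [of i t] le_iff_period_dvd [of "Suc n" t] assms(1) by simp_all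
    then have "\<not> period t dvd m"
      unfolding m(2) by (simp add: dvd_add_right_iff)
    then have "m mod period t = Suc ((m - 1) mod period t)"
      using mod_Suc [of "m - 1" "period t"] m(1) by (simp add: dvd_eq_mod_eq_0 split: if_splits)
    moreover obtain q where "i = period t * q"
      using \<open>period t dvd i\<close> by (rule dvdE)
    then have "n mod period t = (m - 1) mod period t"
      unfolding m(3) by simp
    ultimately show "t \<in> carries n m"
      using t by (simp add: carries_def)
  qed
  then have "card {g (Suc n)<..g i} \<le> card (carries n m)"
    by (rule card_mono [OF finite_carries, rotated]) (use assms in \<open>simp add: m_def\<close>)
  then show ?thesis
    by (simp add: m_def)
qed

end

definition seq_binomial :: "(nat \<Rightarrow> int) \<Rightarrow> nat \<Rightarrow> nat \<Rightarrow> int" where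
  "seq_binomial u n k = (\<Prod>i\<in>{n - k<..n}. u i) div (\<Prod>i\<in>{0<..k}. u i)"

locale strong_divisibility_seq =
  fixes u :: "nat \<Rightarrow> int"
  assumes nonzero: "0 < i \<Longrightarrow> u i \<noteq> 0"
    and gcd_eq: "0 < a \<Longrightarrow> 0 < b \<Longrightarrow> gcd (u a) (u b) = \<bar>u (gcd a b)\<bar>"
begin

lemma gcd_min_hom_multiplicity:
  assumes "prime p"
  shows "gcd_min_hom (\<lambda>i. multiplicity p (u i))"
proof
  fix a b :: nat
  assume "0 < a" and "0 < b"
  have "multiplicity p (u (gcd a b)) = multiplicity p (gcd (u a) (u b))"
    using gcd_eq [OF \<open>0 < a\<close> \<open>0 < b\<close>] multiplicity_normalize_right [of p "u (gcd a b)"] by simp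
  also have "\<dots> = min (multiplicity p (u a)) (multiplicity p (u b))"
    using nonzero \<open>0 < a\<close> \<open>0 < b\<close> assms by (simp add: multiplicity_gcd)
  finally show "multiplicity p (u (gcd a b)) = min (multiplicity p (u a)) (multiplicity p (u b))" .
qed

lemma multiplicity_prod_greaterThanAtMost:
  assumes "prime p"
  shows "multiplicity p (\<Prod>i\<in>{a<..b}. u i) = (\<Sum>i\<in>{a<..b}. multiplicity p (u i))"
  using assms nonzero by (intro prime_elem_multiplicity_prod_distrib) auto

lemma prod_mult_seq_binomial:
  assumes "m \<le> n"
  shows "(\<Prod>i\<in>{0<..m}. u i) * seq_binomial u n m = (\<Prod>i\<in>{n - m<..n}. u i)"
proof -
  have "(\<Prod>i\<in>{0<..m}. u i) dvd (\<Prod>i\<in>{n - m<..n}. u i)"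
  proof (rule multiplicity_le_imp_dvd)
    show "(\<Prod>i\<in>{0<..m}. u i) \<noteq> 0"
      using nonzero by simp
  next
    fix p :: int
    assume "prime p"
    then interpret gcd_min_hom "\<lambda>i. multiplicity p (u i)"
      by (rule gcd_min_hom_multiplicity)
    show "multiplicity p (\<Prod>i\<in>{0<..m}. u i) \<le> multiplicity p (\<Prod>i\<in>{n - m<..n}. u i)"
      using sum_greaterThanAtMost_eq_sum_add_card_carries [OF assms] \<open>prime p\<close>
      by (simp add: multiplicity_prod_greaterThanAtMost)
  qed
  then show ?thesis
    by (simp add: seq_binomial_def)
qed

lemma seq_binomial_nonzero:
  assumes "m \<le> n"
  shows "seq_binomial u n m \<noteq> 0"
  using prod_mult_seq_binomial [OF assms] nonzero by fastforce

lemma multiplicity_seq_binomial: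
  assumes "prime p" and "m \<le> n"
  shows "multiplicity p (seq_binomial u n m) = card (gcd_min_hom.carries (\<lambda>i. multiplicity p (u i)) n m)"
proof -
  interpret gcd_min_hom "\<lambda>i. multiplicity p (u i)"
    using assms(1) by (rule gcd_min_hom_multiplicity)
  have "multiplicity p (\<Prod>i\<in>{n - m<..n}. u i)
        = multiplicity p (\<Prod>i\<in>{0<..m}. u i) + multiplicity p (seq_binomial u n m)"
    unfolding prod_mult_seq_binomial [OF assms(2), symmetric]
    using assms nonzero seq_binomial_nonzero by (intro prime_elem_multiplicity_mult_distrib) auto
  then show ?thesis
    using sum_greaterThanAtMost_eq_sum_add_card_carries [OF assms(2)] assms(1)
    by (simp add: multiplicity_prod_greaterThanAtMost)
qed

lemma multiplicity_mult_seq_binomial: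
  assumes "prime p" and "m \<le> n"
  shows "multiplicity p (u (Suc n) * seq_binomial u n m)
         = multiplicity p (u (Suc n)) + card (gcd_min_hom.carries (\<lambda>i. multiplicity p (u i)) n m)"
proof -
  have "multiplicity p (u (Suc n) * seq_binomial u n m)
        = multiplicity p (u (Suc n)) + multiplicity p (seq_binomial u n m)"
    using assms nonzero seq_binomial_nonzero by (intro prime_elem_multiplicity_mult_distrib) auto
  then show ?thesis
    using multiplicity_seq_binomial [OF assms] by simp
qed

lemma mult_seq_binomial_dvd_Lcm:
  assumes "m \<le> n"
  shows "u (Suc n) * seq_binomial u n m dvd Lcm (u ` {n - m<..Suc n})"
proof (rule multiplicity_le_imp_dvd)
  show "u (Suc n) * seq_binomial u n m \<noteq> 0"
    using nonzero seq_binomial_nonzero [OF assms] by simp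
next
  fix p :: int
  assume "prime p"
  then interpret gcd_min_hom "\<lambda>i. multiplicity p (u i)"
    by (rule gcd_min_hom_multiplicity)
  obtain i where i: "i \<in> {n - m<..Suc n}"
    and le: "multiplicity p (u (Suc n)) + card (carries n m) \<le> multiplicity p (u i)"
    using add_card_carries_le [OF assms] by blast
  have "multiplicity p (u (Suc n) * seq_binomial u n m) = multiplicity p (u (Suc n)) + card (carries n m)"
    using \<open>prime p\<close> assms by (rule multiplicity_mult_seq_binomial)
  also have "\<dots> \<le> multiplicity p (u i)"
    by (rule le)
  also have "\<dots> \<le> multiplicity p (Lcm (u ` {n - m<..Suc n}))"
    using i nonzero by (intro dvd_imp_multiplicity_le) (auto simp: Lcm_0_iff)
  finally show "multiplicity p (u (Suc n) * seq_binomial u n m)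
                \<le> multiplicity p (Lcm (u ` {n - m<..Suc n}))" .
qed

lemma dvd_mult_seq_binomial:
  assumes "0 < i" and "i \<le> n"
  shows "u i dvd u (Suc n) * seq_binomial u n (Suc n - i)"
proof (rule multiplicity_le_imp_dvd)
  show "u i \<noteq> 0"
    using nonzero assms(1) .
next
  fix p :: int
  assume "prime p"
  then interpret gcd_min_hom "\<lambda>i. multiplicity p (u i)"
    by (rule gcd_min_hom_multiplicity)
  have "multiplicity p (u i) \<le> multiplicity p (u (Suc n)) + card (carries n (Suc n - i))"
    using le_add_card_carries [OF assms] .
  also have "\<dots> = multiplicity p (u (Suc n) * seq_binomial u n (Suc n - i))"
    using \<open>prime p\<close> assms by (simp add: multiplicity_mult_seq_binomial)
  finally show "multiplicity p (u i) \<le> multiplicity p (u (Suc n) * seq_binomial u n (Suc n - i))" .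
qed

lemma Lcm_mult_seq_binomial:
  assumes "1 \<le> k" and "k \<le> n"
  shows "Lcm ((\<lambda>m. u (Suc n) * seq_binomial u n m) ` {1..k}) = Lcm (u ` {n - k + 1..n + 1})"
    (is "Lcm (?C ` _) = _")
proof (rule zdvd_antisym_nonneg)
  show "Lcm (?C ` {1..k}) dvd Lcm (u ` {n - k + 1..n + 1})"
  proof (rule Lcm_least)
    fix x
    assume "x \<in> ?C ` {1..k}"
    then obtain m where m: "m \<in> {1..k}" and x: "x = ?C m"
      by blast
    have "?C m dvd Lcm (u ` {n - m<..Suc n})"
      using m assms by (intro mult_seq_binomial_dvd_Lcm) simp
    also have "\<dots> dvd Lcm (u ` {n - k + 1..n + 1})"
      using m by (intro Lcm_subset image_mono) auto
    finally show "x dvd Lcm (u ` {n - k + 1..n + 1})"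
      unfolding x .
  qed
  show "Lcm (u ` {n - k + 1..n + 1}) dvd Lcm (?C ` {1..k})"
  proof (rule Lcm_least)
    fix x
    assume "x \<in> u ` {n - k + 1..n + 1}"
    then obtain i where i: "i \<in> {n - k + 1..n + 1}" and x: "x = u i"
      by blast
    show "x dvd Lcm (?C ` {1..k})"
    proof (cases "i = Suc n")
      case True
      have "?C 1 dvd Lcm (?C ` {1..k})"
        using assms by (intro dvd_Lcm) auto
      then show ?thesis
        unfolding x True by (rule dvd_mult_left)
    next
      case False
      with i assms have "0 < i" "i \<le> n" "Suc n - i \<in> {1..k}"
        by auto
      then have "?C (Suc n - i) dvd Lcm (?C ` {1..k})"
        by (intro dvd_Lcm) auto
      with dvd_mult_seq_binomial [OF \<open>0 < i\<close> \<open>i \<le> n\<close>] show ?thesis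
        unfolding x by (rule dvd_trans)
    qed
  qed
qed simp_all

theorem Lcm_seq_binomial:
  assumes "1 \<le> k" and "k \<le> n"
  shows "Lcm (seq_binomial u n ` {1..k}) = Lcm (u ` {n - k + 1..n + 1}) div \<bar>u (n + 1)\<bar>"
proof -
  have "Lcm (u ` {n - k + 1..n + 1}) = \<bar>u (Suc n)\<bar> * Lcm (seq_binomial u n ` {1..k})"
    using Lcm_mult_seq_binomial [OF assms] Lcm_mult [of "seq_binomial u n ` {1..k}" "u (Suc n)"] assms
    by (simp add: image_image abs_mult)
  then show ?thesis
    using nonzero [of "Suc n"] by simp
qed

end

lemma lucasU_add:
  "lucasU P Q (m + Suc n) = lucasU P Q (Suc m) * lucasU P Q (Suc n) - Q * lucasU P Q m * lucasU P Q n"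
proof (induction P Q n rule: lucasU.induct)
  case (3 P Q n)
  let ?U = "lucasU P Q"
  have "?U (m + Suc (Suc (Suc n))) = P * ?U (m + Suc (Suc n)) - Q * ?U (m + Suc n)"
    by (metis add_Suc_right lucasU.simps(3))
  also have "\<dots> = P * (?U (Suc m) * ?U (Suc (Suc n)) - Q * ?U m * ?U (Suc n))
                  - Q * (?U (Suc m) * ?U (Suc n) - Q * ?U m * ?U n)"
    using "3.IH" by simp
  also have "\<dots> = ?U (Suc m) * (P * ?U (Suc (Suc n)) - Q * ?U (Suc n))
                  - Q * ?U m * (P * ?U (Suc n) - Q * ?U n)"
    by (simp add: algebra_simps)
  also have "\<dots> = ?U (Suc m) * ?U (Suc (Suc (Suc n))) - Q * ?U m * ?U (Suc (Suc n))"
    by (simp only: lucasU.simps)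
  finally show ?case .
qed (simp_all add: algebra_simps)

lemma coprime_lucasU_Q:
  assumes "coprime P Q"
  shows "coprime (lucasU P Q (Suc n)) Q"
proof (induction n)
  case (Suc n)
  have "gcd Q (lucasU P Q (Suc (Suc n))) = gcd Q (P * lucasU P Q (Suc n))"
    using gcd_add_mult[of Q "- lucasU P Q n" "P * lucasU P Q (Suc n)"] by (simp add: mult.commute)
  then show ?case
    using Suc.IH assms by (simp add: coprime_iff_gcd_eq_1 [symmetric] coprime_commute)
qed simp

lemma coprime_lucasU_Suc:
  assumes "coprime P Q"
  shows "coprime (lucasU P Q (Suc n)) (lucasU P Q n)"
proof (induction n)
  case (Suc n)
  have "gcd (lucasU P Q (Suc n)) (lucasU P Q (Suc (Suc n))) = gcd (lucasU P Q (Suc n)) (Q * lucasU P Q n)"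
    using gcd_add_mult[of "lucasU P Q (Suc n)" P "- (Q * lucasU P Q n)"] by (simp add: mult.commute)
  also have "\<dots> = gcd (lucasU P Q (Suc n)) (lucasU P Q n)"
    using coprime_lucasU_Q[OF assms, of n] by (simp add: gcd_mult_right_left_cancel coprime_commute)
  finally show ?case
    using Suc.IH by (simp add: coprime_iff_gcd_eq_1 [symmetric] coprime_commute)
qed simp

lemma gcd_lucasU_add:
  assumes "coprime P Q"
  shows "gcd (lucasU P Q (m + n)) (lucasU P Q n) = gcd (lucasU P Q m) (lucasU P Q n)"
proof (cases n)
  case (Suc k)
  have "gcd (lucasU P Q (Suc k)) (lucasU P Q (m + Suc k))
        = gcd (lucasU P Q (Suc k)) (Q * lucasU P Q k * lucasU P Q m)"
    using gcd_add_mult[of "lucasU P Q (Suc k)" "lucasU P Q (Suc m)" "- (Q * lucasU P Q k * lucasU P Q m)"]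
    by (simp only: lucasU_add gcd_neg2 mult.commute diff_conv_add_uminus mult.left_commute)
  also have "\<dots> = gcd (lucasU P Q (Suc k)) (lucasU P Q m)"
    using coprime_lucasU_Q[OF assms, of k] coprime_lucasU_Suc[OF assms, of k]
    by (simp add: gcd_mult_right_left_cancel)
  finally show ?thesis
    using Suc by (simp add: gcd.commute)
qed simp

lemma gcd_lucasU_add_mult:
  assumes "coprime P Q"
  shows "gcd (lucasU P Q (r + q * n)) (lucasU P Q n) = gcd (lucasU P Q r) (lucasU P Q n)"
proof (induction q)
  case (Suc q)
  have "r + Suc q * n = (r + q * n) + n"
    by simp
  then show ?case
    using gcd_lucasU_add[OF assms, of "r + q * n" n] Suc.IH by metis
qed simp

lemma gcd_lucasU:
  assumes "coprime P Q"
  shows "gcd (lucasU P Q m) (lucasU P Q n) = \<bar>lucasU P Q (gcd m n)\<bar>"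
proof (induction m n rule: gcd_nat_induct)
  case (step m n)
  have "gcd (lucasU P Q m) (lucasU P Q n) = gcd (lucasU P Q (m mod n)) (lucasU P Q n)"
    using gcd_lucasU_add_mult[OF assms, of "m mod n" "m div n" n] by simp
  with step.IH show ?case
    by (simp add: gcd.commute gcd_red_nat [of m n])
qed simp

lemma lucasU_Binet:
  fixes a b :: complex
  assumes "a + b = of_int P" and "a * b = of_int Q"
  shows "of_int (lucasU P Q n) * (a - b) = a ^ n - b ^ n"
  using assms
proof (induction P Q n rule: lucasU.induct)
  case (3 P Q n)
  have "of_int (lucasU P Q (Suc (Suc n))) * (a - b)
        = (a + b) * (of_int (lucasU P Q (Suc n)) * (a - b)) - a * b * (of_int (lucasU P Q n) * (a - b))"
    using "3.prems" by (simp add: algebra_simps)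
  also have "\<dots> = (a + b) * (a ^ Suc n - b ^ Suc n) - a * b * (a ^ n - b ^ n)"
    using "3.IH" "3.prems" by simp
  also have "\<dots> = a ^ Suc (Suc n) - b ^ Suc (Suc n)"
    by (simp add: algebra_simps)
  finally show ?case .
qed simp_all

lemma complex_quadratic_roots:
  fixes p q :: complex
  obtains a b where "\<forall>x. x\<^sup>2 - p * x + q = (x - a) * (x - b)" and "(a - b)\<^sup>2 = p\<^sup>2 - 4 * q"
proof
  define s where "s = csqrt (p\<^sup>2 - 4 * q)"
  have s2: "s\<^sup>2 = p\<^sup>2 - 4 * q"
    by (simp add: s_def)
  show "\<forall>x. x\<^sup>2 - p * x + q = (x - (p + s) / 2) * (x - (p - s) / 2)"
    using s2 by (simp add: field_simps power2_eq_square)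
  show "((p + s) / 2 - (p - s) / 2)\<^sup>2 = p\<^sup>2 - 4 * q"
    using s2 by (simp add: field_simps)
qed

lemma lucasU_nonzero_if_roots:
  fixes a b :: complex
  assumes roots: "\<forall>x. x\<^sup>2 - of_int P * x + of_int Q = (x - a) * (x - b)"
    and "a \<noteq> b" and "Q \<noteq> 0" and "(a / b) ^ n \<noteq> 1"
  shows "lucasU P Q n \<noteq> 0"
proof
  assume "lucasU P Q n = 0"
  have "of_int Q = a * b"
    using roots[rule_format, of 0] by simp
  moreover have "a + b = of_int P"
    using roots[rule_format, of 1] \<open>of_int Q = a * b\<close> by (simp add: algebra_simps)
  ultimately have "a ^ n = b ^ n"
    using lucasU_Binet[of a b P Q n] \<open>lucasU P Q n = 0\<close> by simp
  moreover have "b \<noteq> 0"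
    using \<open>of_int Q = a * b\<close> \<open>Q \<noteq> 0\<close> by auto
  ultimately show False
    using \<open>(a / b) ^ n \<noteq> 1\<close> by (simp add: power_divide)
qed

lemma lucasU_nonzero:
  assumes "Q \<noteq> 0" and "P^2 - 4*Q \<noteq> 0"
    and "\<forall>a b :: complex. (\<forall>x. x^2 - of_int P * x + of_int Q = (x - a) * (x - b))
            \<longrightarrow> (\<forall>m::nat. m > 0 \<longrightarrow> (a / b)^m \<noteq> 1)"
    and "0 < n"
  shows "lucasU P Q n \<noteq> 0"
proof -
  obtain a b :: complex where roots: "\<forall>x. x\<^sup>2 - of_int P * x + of_int Q = (x - a) * (x - b)"
    and "(a - b)\<^sup>2 = (of_int P)\<^sup>2 - 4 * of_int Q"
    by (rule complex_quadratic_roots)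
  then have discr: "(a - b)\<^sup>2 = of_int (P^2 - 4*Q)"
    by simp
  have "a \<noteq> b"
  proof
    assume "a = b"
    then have "of_int (P^2 - 4*Q) = (0 :: complex)"
      using discr by (simp only: diff_self zero_power2)
    with \<open>P^2 - 4*Q \<noteq> 0\<close> show False
      by (simp only: of_int_eq_0_iff)
  qed
  moreover have "(a / b) ^ n \<noteq> 1"
    using assms(3) roots \<open>0 < n\<close> by blast
  ultimately show ?thesis
    using lucasU_nonzero_if_roots[OF roots] \<open>Q \<noteq> 0\<close> by blast
qed

theorem corollary4:
  fixes P Q :: int and n k :: nat
  assumes "P \<noteq> 0" and "Q \<noteq> 0" and "coprime P Q"
    and "P^2 - 4*Q \<noteq> 0"
    and "\<forall>a b :: complex. (\<forall>x. x^2 - of_int P * x + of_int Q = (x - a) * (x - b))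
            \<longrightarrow> (\<forall>m::nat. m > 0 \<longrightarrow> (a / b)^m \<noteq> 1)"
    and "1 \<le> k" and "k \<le> n"
  shows "Lcm ((\<lambda>m. lucasnomial P Q n m) ` {1..k})
         = Lcm (lucasU P Q ` {n-k+1..n+1}) div \<bar>lucasU P Q (n+1)\<bar>"
proof -
  interpret strong_divisibility_seq "lucasU P Q"
  proof
    show "lucasU P Q i \<noteq> 0" if "0 < i" for i
      using lucasU_nonzero [OF assms(2,4,5) that] .
    show "gcd (lucasU P Q a) (lucasU P Q b) = \<bar>lucasU P Q (gcd a b)\<bar>" for a b
      using gcd_lucasU [OF assms(3)] .
  qed
  have "lucasnomial P Q n = seq_binomial (lucasU P Q) n"
    by (simp add: fun_eq_iff lucasnomial_def seq_binomial_def atLeastSucAtMost_greaterThanAtMost)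
  then show ?thesis
    using Lcm_seq_binomial [OF assms(6,7)] by simp
qed

end
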